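(* For all integers $N\ge 2$ and $1\le k\le N-1$, $$\mathbb{E}[\mathcal{N}_k(N)]=\frac{N}{k(k+1)},$$ while $\mathcal{N}_N(N)=1$ (the vertex $v_1$ is the unique vertex of degree $N$).
   Context: A random recursive hypergraph (RRH) is the random hypergraph process defined as follows. At size $N=1$ it has vertex set $\{v_1\}$ and edge set $\{\{v_1\}\}$. Given the hypergraph of size $N$ (vertices $v_1,\dots,v_N$, exactly $N$ edges), one chooses an existing edge $e$ uniformly at random, independently of the past, and adds a new vertex $v_{N+1}$ together with the new edge $e\cup\{v_{N+1}\}$. The degree of a vertex is the number of edges containing it. $\mathcal{N}_k(N)$ denotes the number of vertices of degree $k$ in the RRH of size $N$. *)

theory Defs
  imports "HOL-Probability.Probability"
begin

text \<open>A hypergraph of size N is represented by the list of its N edges (in order of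
creation); its vertices are v_1,...,v_N, encoded as the natural numbers 1..N.\<close>

type_synonym hypergraph = "nat set list"

text \<open>Size 0 is junk.\<close>
fun rrh :: "nat \<Rightarrow> hypergraph pmf" where
  "rrh 0 = return_pmf []"
| "rrh (Suc 0) = return_pmf [{1}]"
| "rrh (Suc (Suc n)) =
     bind_pmf (rrh (Suc n)) (\<lambda>H.
       bind_pmf (pmf_of_set {..<length H}) (\<lambda>i.
         return_pmf (H @ [H ! i \<union> {Suc (Suc n)}])))"

definition degree :: "hypergraph \<Rightarrow> nat \<Rightarrow> nat" where
  "degree H v = card {i. i < length H \<and> v \<in> H ! i}"

definition numDeg :: "nat \<Rightarrow> hypergraph \<Rightarrow> nat" where
  "numDeg k H = card {v \<in> {1..length H}. degree H v = k}"

end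

theory Submission
  imports Defs
begin

text \<open>Attaching the new vertex to a uniformly chosen edge raises the degree of each old
vertex v by one with probability degree(v)/N. Hence a vertex of degree k keeps it with
probability (N - k)/N, a vertex of degree k - 1 reaches it with probability (k - 1)/N,
and the new vertex always has degree 1. The expected counts e(N, k) therefore satisfy
  N e(N+1, k) = (N - k) e(N, k) + (k - 1) e(N, k - 1) + [k = 1] N,
which N/(k(k+1)) solves for k < N. The root v1 lies in every edge, while every other
vertex misses the first edge {v1}.\<close>

definition rrh_shaped :: "nat \<Rightarrow> hypergraph \<Rightarrow> bool" where
  "rrh_shaped N H \<longleftrightarrow>
     length H = N \<and> H ! 0 = {1} \<and> (\<forall>i<N. 1 \<in> H ! i \<and> H ! i \<subseteq> {1..N})"

lemma set_pmf_rrh_Suc_Suc: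
  "set_pmf (rrh (Suc (Suc n))) =
     (\<Union>H\<in>set_pmf (rrh (Suc n)). (\<lambda>i. H @ [H ! i \<union> {Suc (Suc n)}]) ` set_pmf (pmf_of_set {..<length H}))"
  by auto

lemma set_pmf_of_set_lessThan: "0 < (n :: nat) \<Longrightarrow> set_pmf (pmf_of_set {..<n}) = {..<n}"
  by (subst set_pmf_of_set) auto

lemma rrh_shaped_if_in_rrh: "H \<in> set_pmf (rrh (Suc n)) \<Longrightarrow> rrh_shaped (Suc n) H"
proof (induction n arbitrary: H)
  case 0
  then show ?case by (auto simp: rrh_shaped_def)
next
  case (Suc n)
  then obtain G i where G: "G \<in> set_pmf (rrh (Suc n))"
    and i: "i \<in> set_pmf (pmf_of_set {..<length G})" and H: "H = G @ [G ! i \<union> {Suc (Suc n)}]"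
    unfolding set_pmf_rrh_Suc_Suc by blast
  have shaped: "rrh_shaped (Suc n) G"
    using Suc.IH G by blast
  then have len: "length G = Suc n"
    by (simp add: rrh_shaped_def)
  with i have "i < Suc n"
    by (simp add: set_pmf_of_set_lessThan)
  have "1 \<in> H ! j \<and> H ! j \<subseteq> {1..Suc (Suc n)}" if "j < Suc (Suc n)" for j
  proof -
    have "1 \<in> G ! j' \<and> G ! j' \<subseteq> {1..Suc (Suc n)}" if "j' < Suc n" for j'
      using shaped that by (fastforce simp: rrh_shaped_def)
    with \<open>j < Suc (Suc n)\<close> \<open>i < Suc n\<close> show ?thesis
      by (cases "j < Suc n") (auto simp: H nth_append len)
  qed
  with shaped len show ?case
    by (simp add: rrh_shaped_def H nth_append)
qed

lemma finite_set_pmf_rrh: "finite (set_pmf (rrh n))"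
proof (induction n rule: rrh.induct)
  case (3 n)
  have "length H = Suc n" if "H \<in> set_pmf (rrh (Suc n))" for H
    using rrh_shaped_if_in_rrh[OF that] by (simp add: rrh_shaped_def)
  with 3 show ?case
    unfolding set_pmf_rrh_Suc_Suc by (auto simp: set_pmf_of_set_lessThan)
qed simp_all

lemma expectation_bind_pmf_finite:
  fixes f :: "'b \<Rightarrow> real"
  assumes fin: "finite (set_pmf M)" and fin_K: "\<And>x. x \<in> set_pmf M \<Longrightarrow> finite (set_pmf (K x))"
    and nonneg: "\<And>y. f y \<ge> 0"
  shows "measure_pmf.expectation (bind_pmf M K) f =
         measure_pmf.expectation M (\<lambda>x. measure_pmf.expectation (K x) f)"
proof -
  have "measure_pmf.expectation (bind_pmf M K) f =
        enn2real (\<integral>\<^sup>+y. ennreal (f y) \<partial>bind_pmf M K)"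
    by (rule integral_eq_nn_integral) (auto simp: nonneg)
  also have "(\<integral>\<^sup>+y. ennreal (f y) \<partial>bind_pmf M K) = (\<integral>\<^sup>+x. \<integral>\<^sup>+y. ennreal (f y) \<partial>K x \<partial>M)"
    by simp
  also have "\<dots> = (\<integral>\<^sup>+x. ennreal (measure_pmf.expectation (K x) f) \<partial>M)"
    by (intro nn_integral_cong_AE)
      (auto simp: AE_measure_pmf_iff nonneg
            intro!: nn_integral_eq_integral integrable_measure_pmf_finite fin_K)
  also have "\<dots> = ennreal (measure_pmf.expectation M (\<lambda>x. measure_pmf.expectation (K x) f))"
    by (auto simp: nonneg intro!: nn_integral_eq_integral integrable_measure_pmf_finite fin AE_I2
        integral_nonneg_AE)
  finally show ?thesis
    by (simp add: integral_nonneg nonneg)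
qed

lemma degree_snoc: "degree (H @ [e]) v = degree H v + of_bool (v \<in> e)"
proof -
  have "{j. j < length (H @ [e]) \<and> v \<in> (H @ [e]) ! j} =
        {j. j < length H \<and> v \<in> H ! j} \<union> {j. j = length H \<and> v \<in> e}"
    by (auto simp: nth_append less_Suc_eq)
  then show ?thesis
    unfolding degree_def by (simp add: card_Un_disjoint)
qed

lemma degree_le_length: "degree H v \<le> length H"
  unfolding degree_def by (rule card_mono[of "{..<length H}", simplified]) auto

lemma numDeg_eq_sum: "real (numDeg k H) = (\<Sum>v\<in>{1..length H}. of_bool (degree H v = k))"
proof -
  have "real (numDeg k H) = (\<Sum>v\<in>{v \<in> {1..length H}. degree H v = k}. 1)"
    by (simp add: numDeg_def)
  also have "\<dots> = (\<Sum>v\<in>{1..length H}. of_bool (degree H v = k))"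
    by (subst sum.inter_filter) (simp_all add: of_bool_def)
  finally show ?thesis .
qed

text \<open>Of the N possible attachment edges, degree(v) raise the degree of v by one and
the others leave it unchanged.\<close>
lemma sum_attach_degree_eq:
  assumes len: "length H = N"
  shows "(\<Sum>i<N. of_bool (degree H v + of_bool (v \<in> H ! i) = k)) =
     (if degree H v + 1 = k then real (degree H v) else 0) +
     (if degree H v = k then real N - real k else 0)"
proof -
  let ?d = "degree H v" and ?P = "{i. v \<in> H ! i}"
  have card_P: "card ({..<N} \<inter> ?P) = ?d"
    using len by (simp add: degree_def Int_def lessThan_def)
  then have card_not_P: "card ({..<N} \<inter> - ?P) = N - ?d"
    by (metis Diff_eq card_Diff_subset_Int card_lessThan finite_lessThan finite_Int)
  have "(\<Sum>i<N. of_bool (?d + of_bool (v \<in> H ! i) = k)) =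
        (\<Sum>i<N. if v \<in> H ! i then of_bool (?d + 1 = k) else of_bool (?d = k) :: real)"
    by (intro sum.cong) auto
  also have "\<dots> = (\<Sum>i\<in>{..<N} \<inter> ?P. of_bool (?d + 1 = k)) +
                  (\<Sum>i\<in>{..<N} \<inter> - ?P. of_bool (?d = k))"
    by (rule sum.If_cases) simp
  also have "\<dots> = real ?d * of_bool (?d + 1 = k) + real (N - ?d) * of_bool (?d = k)"
    by (simp add: card_P card_not_P)
  finally show ?thesis
    using degree_le_length[of H v] len by (auto simp: of_nat_diff)
qed

lemma sum_numDeg_attach:
  assumes shaped: "rrh_shaped N H"
  shows "(\<Sum>i<N. real (numDeg k (H @ [H ! i \<union> {Suc N}]))) =
     (real N - real k) * real (numDeg k H) + real (k - 1) * real (numDeg (k - 1) H)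
     + of_bool (k = 1) * real N"
proof -
  have len: "length H = N" and edges: "\<And>i. i < N \<Longrightarrow> H ! i \<subseteq> {1..N}"
    using shaped by (auto simp: rrh_shaped_def)
  let ?d = "degree H"
  have "?d (Suc N) = 0"
    using edges len by (fastforce simp: degree_def)
  then have new_vertex: "degree (H @ [H ! i \<union> {Suc N}]) (Suc N) = 1" for i
    by (simp add: degree_snoc)
  have old_vertices: "(\<Sum>v\<in>{1..N}. of_bool (degree (H @ [H ! i \<union> {Suc N}]) v = k)) =
     (\<Sum>v\<in>{1..N}. of_bool (?d v + of_bool (v \<in> H ! i) = k) :: real)" for i
    by (intro sum.cong) (auto simp: degree_snoc)
  have per_edge: "real (numDeg k (H @ [H ! i \<union> {Suc N}])) =
     (\<Sum>v\<in>{1..N}. of_bool (?d v + of_bool (v \<in> H ! i) = k)) + of_bool (k = 1)" for i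
  proof -
    have vertices: "{1..length (H @ [H ! i \<union> {Suc N}])} = insert (Suc N) {1..N}"
      using len by auto
    have fresh: "Suc N \<notin> {1..N}"
      by simp
    show ?thesis
      unfolding numDeg_eq_sum vertices sum.insert[OF finite_atLeastAtMost fresh] new_vertex old_vertices
      by (simp add: add.commute eq_commute[of 1 k] del: sum_of_bool_eq)
  qed
  have "(\<Sum>i<N. real (numDeg k (H @ [H ! i \<union> {Suc N}]))) =
     (\<Sum>v\<in>{1..N}. \<Sum>i<N. of_bool (?d v + of_bool (v \<in> H ! i) = k)) + of_bool (k = 1) * real N"
    unfolding per_edge sum.distrib sum.swap[of _ "{..<N}" "{1..N}"] by (simp del: sum_of_bool_eq)
  also have "(\<Sum>v\<in>{1..N}. \<Sum>i<N. of_bool (?d v + of_bool (v \<in> H ! i) = k)) =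
     (\<Sum>v\<in>{1..N}. real (k - 1) * of_bool (?d v = k - 1) + (real N - real k) * of_bool (?d v = k))"
    by (intro sum.cong refl) (auto simp: sum_attach_degree_eq[OF len])
  also have "\<dots> = real (k - 1) * real (numDeg (k - 1) H) + (real N - real k) * real (numDeg k H)"
    by (simp add: numDeg_eq_sum len sum.distrib sum_distrib_left)
  finally show ?thesis
    by simp
qed

lemma expectation_numDeg_attach:
  assumes shaped: "rrh_shaped N H" and "0 < N"
  shows "measure_pmf.expectation
           (bind_pmf (pmf_of_set {..<length H}) (\<lambda>i. return_pmf (H @ [H ! i \<union> {Suc N}])))
           (\<lambda>H. real (numDeg k H)) =
         ((real N - real k) * real (numDeg k H) + real (k - 1) * real (numDeg (k - 1) H)
          + of_bool (k = 1) * real N) / real N"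
proof -
  have "length H = N"
    using shaped by (simp add: rrh_shaped_def)
  then have "bind_pmf (pmf_of_set {..<length H}) (\<lambda>i. return_pmf (H @ [H ! i \<union> {Suc N}])) =
             map_pmf (\<lambda>i. H @ [H ! i \<union> {Suc N}]) (pmf_of_set {..<N})"
    by (simp add: map_pmf_def)
  then have "measure_pmf.expectation
           (bind_pmf (pmf_of_set {..<length H}) (\<lambda>i. return_pmf (H @ [H ! i \<union> {Suc N}])))
           (\<lambda>H. real (numDeg k H)) =
        measure_pmf.expectation (pmf_of_set {..<N}) (\<lambda>i. real (numDeg k (H @ [H ! i \<union> {Suc N}])))"
    by simp
  also have "\<dots> = (\<Sum>i<N. real (numDeg k (H @ [H ! i \<union> {Suc N}]))) / real N"
    using \<open>0 < N\<close> by (subst integral_pmf_of_set) auto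
  finally show ?thesis
    by (simp only: sum_numDeg_attach[OF shaped])
qed

text \<open>The junk value N/0 = 0 at k = 0 is also the true expectation there.\<close>
definition expected_numDeg :: "nat \<Rightarrow> nat \<Rightarrow> real" where
  "expected_numDeg N k = (if k < N then real N / (real k * (real k + 1)) else of_bool (k = N))"

lemma expected_numDeg_Suc:
  assumes "0 < N"
  shows "real N * expected_numDeg (Suc N) k =
     (real N - real k) * expected_numDeg N k + real (k - 1) * expected_numDeg N (k - 1)
     + of_bool (k = 1) * real N"
proof -
  consider "k = 0" | "k = 1" | "2 \<le> k" "k < N" | "2 \<le> k" "k = N" | "k = Suc N" | "Suc N < k"
    using assms by linarith
  then show ?thesis
  proof cases
    case 2
    with assms show ?thesis
      by (cases "N = 1") (auto simp: expected_numDeg_def field_simps)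
  next
    case 3
    have "real (k - 1) * expected_numDeg N (k - 1) = real N / real k"
      using 3 by (simp add: expected_numDeg_def of_nat_diff)
    moreover have "real N * (real N + 1) / (real k * (real k + 1)) =
        (real N - real k) * (real N / (real k * (real k + 1))) + real N / real k"
    proof -
      have "real k * (real k + 1) > 0"
        using 3 by simp
      then show ?thesis
        by (simp add: divide_simps) (simp add: algebra_simps)
    qed
    ultimately show ?thesis
      using 3 by (simp add: expected_numDeg_def add.commute[of 1])
  next
    case 4
    then have "real N * (real N + 1) \<noteq> 0" "real N - 1 \<noteq> 0"
      by auto
    with 4 show ?thesis
      by (simp add: expected_numDeg_def of_nat_diff)
  qed (use assms in \<open>auto simp: expected_numDeg_def field_simps\<close>)
qed

lemma expectation_numDeg_rrh:
  "measure_pmf.expectation (rrh (Suc n)) (\<lambda>H. real (numDeg k H)) = expected_numDeg (Suc n) k"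
proof (induction n arbitrary: k)
  case 0
  have "{i. i < length [{1 :: nat}] \<and> 1 \<in> [{1 :: nat}] ! i} = {0}"
    by auto
  then have "degree [{1}] 1 = 1"
    by (simp add: degree_def)
  then have "{v \<in> {1..length [{1 :: nat}]}. degree [{1}] v = k} = (if k = 1 then {1} else {})"
    by auto
  then have "numDeg k [{1}] = of_bool (k = 1)"
    by (simp add: numDeg_def)
  then show ?case
    by (simp add: expected_numDeg_def)
next
  case (Suc n)
  let ?M = "rrh (Suc n)" and ?N = "real (Suc n)"
  let ?attach = "\<lambda>H. bind_pmf (pmf_of_set {..<length H})
                   (\<lambda>i. return_pmf (H @ [H ! i \<union> {Suc (Suc n)}]))"
  let ?E = "\<lambda>k. measure_pmf.expectation ?M (\<lambda>H. real (numDeg k H))"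
  have "finite (set_pmf (?attach H))" if "H \<in> set_pmf ?M" for H
    using rrh_shaped_if_in_rrh[OF that] by (simp add: rrh_shaped_def set_pmf_of_set_lessThan)
  then have "measure_pmf.expectation (rrh (Suc (Suc n))) (\<lambda>H. real (numDeg k H)) =
             measure_pmf.expectation ?M (\<lambda>H. measure_pmf.expectation (?attach H) (\<lambda>H. real (numDeg k H)))"
    unfolding rrh.simps by (intro expectation_bind_pmf_finite finite_set_pmf_rrh) auto
  also have "\<dots> = measure_pmf.expectation ?M (\<lambda>H.
       ((?N - real k) * real (numDeg k H) + real (k - 1) * real (numDeg (k - 1) H)
        + of_bool (k = 1) * ?N) / ?N)"
    by (intro integral_cong_AE AE_pmfI expectation_numDeg_attach rrh_shaped_if_in_rrh) simp_all
  also have "\<dots> = ((?N - real k) * ?E k + real (k - 1) * ?E (k - 1) + of_bool (k = 1) * ?N) / ?N"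
    by (simp add: integrable_measure_pmf_finite[OF finite_set_pmf_rrh])
  also have "\<dots> = expected_numDeg (Suc (Suc n)) k"
    unfolding Suc.IH using expected_numDeg_Suc[of "Suc n" k] by (simp add: field_simps)
  finally show ?case .
qed

lemma degree_root_if_rrh_shaped: "rrh_shaped N H \<Longrightarrow> degree H 1 = N"
proof -
  assume "rrh_shaped N H"
  then have "{i. i < length H \<and> 1 \<in> H ! i} = {..<N}"
    by (auto simp: rrh_shaped_def)
  with \<open>rrh_shaped N H\<close> show ?thesis
    by (simp add: degree_def)
qed

lemma degree_less_if_rrh_shaped:
  assumes shaped: "rrh_shaped N H" and "0 < N" and "v \<noteq> 1"
  shows "degree H v < N"
proof -
  have "{i. i < length H \<and> v \<in> H ! i} \<subseteq> {1..<N}"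
    using shaped \<open>v \<noteq> 1\<close> by (auto simp: rrh_shaped_def Suc_le_eq intro!: gr0I)
  then have "degree H v \<le> card {1..<N}"
    unfolding degree_def by (intro card_mono) auto
  with \<open>0 < N\<close> show ?thesis
    by simp
qed

lemma numDeg_if_rrh_shaped:
  assumes shaped: "rrh_shaped N H" and "0 < N"
  shows "numDeg N H = 1"
proof -
  have "{v \<in> {1..length H}. degree H v = N} = {1}"
    using shaped degree_root_if_rrh_shaped[OF shaped] degree_less_if_rrh_shaped[OF shaped \<open>0 < N\<close>]
    by (force simp: rrh_shaped_def)
  then show ?thesis
    by (simp add: numDeg_def)
qed

theorem mainTheorem4:
  fixes N :: nat
  assumes "N \<ge> 2"
  shows "(\<forall>k. 1 \<le> k \<and> k \<le> N - 1 \<longrightarrow>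
            measure_pmf.expectation (rrh N) (\<lambda>H. real (numDeg k H))
              = real N / (real k * (real k + 1)))
         \<and> (\<forall>H \<in> set_pmf (rrh N). numDeg N H = 1 \<and> degree H 1 = N)"
proof -
  obtain n where N: "N = Suc n"
    using assms by (cases N) auto
  have "measure_pmf.expectation (rrh N) (\<lambda>H. real (numDeg k H)) = real N / (real k * (real k + 1))"
    if "1 \<le> k" "k \<le> N - 1" for k
    using that assms by (simp add: N expectation_numDeg_rrh expected_numDeg_def)
  moreover have "numDeg N H = 1 \<and> degree H 1 = N" if "H \<in> set_pmf (rrh N)" for H
  proof -
    have "rrh_shaped N H"
      using rrh_shaped_if_in_rrh that by (simp add: N)
    then show ?thesis
      using numDeg_if_rrh_shaped degree_root_if_rrh_shaped N by blast
  qed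
  ultimately show ?thesis
    by blast
qed

end
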